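(* Let $\mathcal{C}$ be a covering of a finite set $E$ such that $SH$ is the closure operator of a matroid on $E$. Then $\mathcal{I}_{SH}(\mathcal{C})\subseteq\mathcal{I}(\mathcal{C})$ and $\mathcal{L}_{SH}(M(\mathcal{C}))\subseteq\mathcal{L}(M(\mathcal{C}))$.
   Context: A covering of $E$ is a family of nonempty subsets of $E$ with union $E$. $SH(X)=\bigcup\{K\in\mathcal{C}:K\cap X\neq\emptyset\}$. When $SH$ is the closure operator of a matroid, $\mathcal{I}_{SH}(\mathcal{C})=\{I\subseteq E:x\notin SH(I-\{x\})\ \forall x\in I\}$ is its family of independent sets and $\mathcal{L}_{SH}(M(\mathcal{C}))=\{X:SH(X)=X\}$ its set of closed sets. $\mathcal{I}(\mathcal{C})$ is the family of partial transversals of $\mathcal{C}$ (sets of distinct elements $e_1,\dots,e_k$ with $e_j\in K_{i_j}$ for distinct blocks $K_{i_1},\dots,K_{i_k}$), the independent sets of the transversal matroid $M(\mathcal{C})$, and $\mathcal{L}(M(\mathcal{C}))$ is the set of closed sets of $M(\mathcal{C})$, where $cl(X)=\{a:r(X\cup\{a\})=r(X)\}$. *)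

theory Defs
  imports Main
begin

definition covering :: "'a set set \<Rightarrow> 'a set \<Rightarrow> bool" where
  "covering C E \<longleftrightarrow> (\<forall>K\<in>C. K \<noteq> {} \<and> K \<subseteq> E) \<and> \<Union>C = E"

definition SH :: "'a set set \<Rightarrow> 'a set \<Rightarrow> 'a set" where
  "SH C X = \<Union>{K\<in>C. K \<inter> X \<noteq> {}}"

definition matroid_closure :: "'a set \<Rightarrow> ('a set \<Rightarrow> 'a set) \<Rightarrow> bool" where
  "matroid_closure E cl \<longleftrightarrow>
     (\<forall>X. X \<subseteq> E \<longrightarrow> X \<subseteq> cl X \<and> cl X \<subseteq> E) \<and>
     (\<forall>X Y. X \<subseteq> Y \<and> Y \<subseteq> E \<longrightarrow> cl X \<subseteq> cl Y) \<and>
     (\<forall>X. X \<subseteq> E \<longrightarrow> cl (cl X) = cl X) \<and>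
     (\<forall>X x y. X \<subseteq> E \<and> x \<in> E \<and> y \<in> E \<and> y \<in> cl (insert x X) \<and> y \<notin> cl X
        \<longrightarrow> x \<in> cl (insert y X))"

definition indep_SH :: "'a set set \<Rightarrow> 'a set \<Rightarrow> 'a set set" where
  "indep_SH C E = {I. I \<subseteq> E \<and> (\<forall>x\<in>I. x \<notin> SH C (I - {x}))}"

definition closed_SH :: "'a set set \<Rightarrow> 'a set \<Rightarrow> 'a set set" where
  "closed_SH C E = {X. X \<subseteq> E \<and> SH C X = X}"

definition partial_transversal :: "'a set set \<Rightarrow> 'a set \<Rightarrow> bool" where
  "partial_transversal C I \<longleftrightarrow> (\<exists>f. inj_on f I \<and> (\<forall>e\<in>I. f e \<in> C \<and> e \<in> f e))"

definition transversal_indep :: "'a set set \<Rightarrow> 'a set \<Rightarrow> 'a set set" where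
  "transversal_indep C E = {I. I \<subseteq> E \<and> partial_transversal C I}"

text \<open>Rank of the transversal matroid M(C) (for finite X).\<close>
definition trank :: "'a set set \<Rightarrow> 'a set \<Rightarrow> nat" where
  "trank C X = Max {card I | I. I \<subseteq> X \<and> partial_transversal C I}"

definition tcl :: "'a set set \<Rightarrow> 'a set \<Rightarrow> 'a set \<Rightarrow> 'a set" where
  "tcl C E X = {a\<in>E. trank C (insert a X) = trank C X}"

definition transversal_closed :: "'a set set \<Rightarrow> 'a set \<Rightarrow> 'a set set" where
  "transversal_closed C E = {X. X \<subseteq> E \<and> tcl C E X = X}"

end

theory Submission
  imports Defs
begin

text \<open>Both inclusions hold for an arbitrary covering.
  If no element x of I lies in SH(I - {x}), then distinct elements of I never share a block, so any choice of blocks is a matching.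
  If X is SH-closed, every block matched into X stays inside X, so an element a outside X can be
  matched to any block containing it; hence adding a raises the transversal rank and a is not
  in the closure of X.\<close>

lemma partial_transversal_empty: "partial_transversal C {}"
  unfolding partial_transversal_def by simp

lemma finite_trank_candidates:
  assumes "finite X"
  shows "finite {card I | I. I \<subseteq> X \<and> partial_transversal C I}"
proof -
  have "{card I | I. I \<subseteq> X \<and> partial_transversal C I} \<subseteq> {0..card X}"
    using assms by (auto intro: card_mono)
  then show ?thesis
    using finite_subset by blast
qed

lemma card_le_trank:
  assumes "finite X" "I \<subseteq> X" "partial_transversal C I"
  shows "card I \<le> trank C X"
  unfolding trank_def using assms finite_trank_candidates[OF assms(1), of C]
  by (intro Max_ge) auto

lemma trank_attained:
  assumes "finite X"
  obtains I where "I \<subseteq> X" "partial_transversal C I" "trank C X = card I"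
proof -
  have "{card I | I. I \<subseteq> X \<and> partial_transversal C I} \<noteq> {}"
    using partial_transversal_empty by blast
  then have "trank C X \<in> {card I | I. I \<subseteq> X \<and> partial_transversal C I}"
    unfolding trank_def using Max_in finite_trank_candidates[OF assms] by blast
  then show ?thesis
    using that by blast
qed

lemma partial_transversal_if_SH_independent:
  assumes "I \<subseteq> \<Union>C" and "\<forall>x\<in>I. x \<notin> SH C (I - {x})"
  shows "partial_transversal C I"
proof -
  define f where "f e = (SOME K. K \<in> C \<and> e \<in> K)" for e
  have f: "f e \<in> C \<and> e \<in> f e" if "e \<in> I" for e
    using that assms(1) unfolding f_def by (metis (mono_tags, lifting) UnionE someI_ex subsetD)
  have "inj_on f I"
  proof (rule inj_onI, rule ccontr)
    fix x y
    assume xy: "x \<in> I" "y \<in> I" "f x = f y" "x \<noteq> y"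
    then have "f x \<inter> (I - {x}) \<noteq> {}"
      using f by auto
    then have "x \<in> SH C (I - {x})"
      unfolding SH_def using f xy(1) by blast
    then show False
      using assms(2) xy(1) by blast
  qed
  then show ?thesis
    unfolding partial_transversal_def using f by blast
qed

lemma partial_transversal_insert_outside_SH_closed:
  assumes "SH C X \<subseteq> X" and "I \<subseteq> X" and "partial_transversal C I"
    and "K \<in> C" and "a \<in> K" and "a \<notin> X"
  shows "partial_transversal C (insert a I)"
proof -
  obtain f where f: "inj_on f I" "\<forall>e\<in>I. f e \<in> C \<and> e \<in> f e"
    using assms(3) unfolding partial_transversal_def by blast
  have matched_inside: "f e \<subseteq> X" if "e \<in> I" for e
  proof -
    have "f e \<in> C" "f e \<inter> X \<noteq> {}"
      using f(2) that assms(2) by auto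
    then show ?thesis
      using assms(1) unfolding SH_def by blast
  qed
  have "a \<notin> I"
    using assms(2,6) by blast
  have "inj_on (f(a := K)) (insert a I)"
    using f(1) \<open>a \<notin> I\<close> matched_inside assms(5,6) by (auto simp: inj_on_def)
  moreover have "\<forall>e\<in>insert a I. (f(a := K)) e \<in> C \<and> e \<in> (f(a := K)) e"
    using f(2) assms(4,5) \<open>a \<notin> I\<close> by auto
  ultimately show ?thesis
    unfolding partial_transversal_def by blast
qed

lemma trank_insert_outside_SH_closed:
  assumes "finite X" and "SH C X \<subseteq> X" and "a \<in> \<Union>C" and "a \<notin> X"
  shows "trank C X < trank C (insert a X)"
proof -
  obtain I where I: "I \<subseteq> X" "partial_transversal C I" "trank C X = card I"
    using trank_attained[OF assms(1)] by blast
  obtain K where "K \<in> C" "a \<in> K"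
    using assms(3) by blast
  then have "partial_transversal C (insert a I)"
    using partial_transversal_insert_outside_SH_closed[OF assms(2) I(1,2)] assms(4) by blast
  moreover have "insert a I \<subseteq> insert a X"
    using I(1) by blast
  ultimately have "card (insert a I) \<le> trank C (insert a X)"
    using card_le_trank[of "insert a X"] assms(1) by simp
  moreover have "card (insert a I) = card I + 1"
    using I(1) assms(1,4) finite_subset by (metis card_insert_disjoint in_mono Suc_eq_plus1)
  ultimately show ?thesis
    using I(3) by simp
qed

lemma indep_SH_subset_transversal_indep:
  assumes "covering C E"
  shows "indep_SH C E \<subseteq> transversal_indep C E"
  using assms partial_transversal_if_SH_independent
  unfolding indep_SH_def transversal_indep_def covering_def by auto

lemma closed_SH_subset_transversal_closed:
  assumes "finite E" and "covering C E"
  shows "closed_SH C E \<subseteq> transversal_closed C E"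
proof
  fix X
  assume "X \<in> closed_SH C E"
  then have XE: "X \<subseteq> E" and closed: "SH C X = X"
    unfolding closed_SH_def by auto
  have "finite X"
    using XE assms(1) finite_subset by blast
  have "a \<notin> tcl C E X" if "a \<in> E" "a \<notin> X" for a
    using trank_insert_outside_SH_closed[OF \<open>finite X\<close>, of C a] closed that assms(2)
    unfolding tcl_def covering_def by auto
  moreover have "X \<subseteq> tcl C E X"
    unfolding tcl_def using XE by (auto simp: insert_absorb)
  moreover have "tcl C E X \<subseteq> E"
    unfolding tcl_def by blast
  ultimately show "X \<in> transversal_closed C E"
    unfolding transversal_closed_def using XE by blast
qed

theorem proposition26:
  fixes C :: "'a set set" and E :: "'a set"
  assumes "finite E"
    and "covering C E"
    and "matroid_closure E (SH C)"
  shows "indep_SH C E \<subseteq> transversal_indep C E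
     \<and> closed_SH C E \<subseteq> transversal_closed C E"
  using indep_SH_subset_transversal_indep[OF assms(2)]
    closed_SH_subset_transversal_closed[OF assms(1,2)] by blast

end
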